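(* Let $1\le p\le q\le\infty$ and $r\in(0,\infty]$. There exists a constant $C\ge1$ such that $$C^{-1}\|f\|_{\hat M^p_{q,r}}\le\|D_p(h)A(s)T(y)P(\xi)f\|_{\hat M^p_{q,r}}\le C\|f\|_{\hat M^p_{q,r}}$$ for any $f\in\hat M^p_{q,r}$ and any $(h,\xi,s,y)\in2^{\mathbb Z}\times\mathbb R\times\mathbb R\times\mathbb R$. Moreover, if $\xi=0$, the inequalities hold with $C=1$.
   Context: $\mathcal D=\{[k2^{-j},(k+1)2^{-j}):j,k\in\mathbb Z\}$. For $1\le p\le q\le\infty$, $\|f\|_{\hat M^p_{q,r}}=\big\||I|^{\frac1q-\frac1p}\|\hat f\|_{L^{q'}(I)}\big\|_{\ell^r_{I\in\mathcal D}}$ (with sup if $r=\infty$), $q'$ the Hölder conjugate. $(T(y)f)(x)=f(x-y)$, $(P(\xi)f)(x)=e^{-ix\xi}f(x)$, $(D_p(h)f)(x)=h^{1/p}f(hx)$, $A(s)=e^{-s\partial_x^3}$ (Fourier multiplier $e^{is\xi^3}$). *)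

theory Defs
  imports "HOL-Analysis.Analysis"
begin

(* Functions f are represented through their Fourier transform F = \<hat>f :: real \<Rightarrow> complex,
   with the convention \<hat>f(\<eta>) = \<integral> e^{-ix\<eta>} f(x) dx. *)

definition recip :: "ennreal \<Rightarrow> real" where
  "recip p = enn2real (inverse p)"

definition hconj :: "ennreal \<Rightarrow> ennreal" where
  "hconj q = (if q = 1 then \<infinity> else if q = \<infinity> then 1 else ennreal (enn2real q / (enn2real q - 1)))"

definition epow :: "ennreal \<Rightarrow> real \<Rightarrow> ennreal" where
  "epow x a = (if x = \<infinity> then \<infinity> else ennreal (enn2real x powr a))"

definition Lnorm :: "ennreal \<Rightarrow> real set \<Rightarrow> (real \<Rightarrow> complex) \<Rightarrow> ennreal" where
  "Lnorm e I F =
     (if e = \<infinity> then Inf {z. AE x in lborel. x \<in> I \<longrightarrow> ennreal (cmod (F x)) \<le> z}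
      else epow (\<integral>\<^sup>+ x. indicator I x * ennreal (cmod (F x) powr enn2real e) \<partial>lborel)
                (1 / enn2real e))"

definition dyadic :: "int \<Rightarrow> int \<Rightarrow> real set" where
  "dyadic j k = {real_of_int k * 2 powr (- real_of_int j) ..< (real_of_int k + 1) * 2 powr (- real_of_int j)}"

definition locpiece :: "ennreal \<Rightarrow> ennreal \<Rightarrow> (real \<Rightarrow> complex) \<Rightarrow> int \<times> int \<Rightarrow> ennreal" where
  "locpiece p q F jk =
     ennreal ((2 powr (- real_of_int (fst jk))) powr (recip q - recip p))
       * Lnorm (hconj q) (dyadic (fst jk) (snd jk)) F"

definition hatM_norm :: "ennreal \<Rightarrow> ennreal \<Rightarrow> ennreal \<Rightarrow> (real \<Rightarrow> complex) \<Rightarrow> ennreal" where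
  "hatM_norm p q r F =
     (if r = \<infinity> then (SUP jk. locpiece p q F jk)
      else epow (\<integral>\<^sup>+ jk. epow (locpiece p q F jk) (enn2real r) \<partial>count_space UNIV)
                (1 / enn2real r))"

(* Fourier-side action of the operators:
   (T(y)f)^ (\<eta>) = e^{-iy\<eta>} \<hat>f(\<eta>),  (P(\<xi>)f)^ (\<eta>) = \<hat>f(\<eta>+\<xi>),
   (D_p(h)f)^ (\<eta>) = h^{1/p-1} \<hat>f(\<eta>/h),  (A(s)f)^ (\<eta>) = e^{is\<eta>^3} \<hat>f(\<eta>) *)
definition hatT :: "real \<Rightarrow> (real \<Rightarrow> complex) \<Rightarrow> real \<Rightarrow> complex" where
  "hatT y F = (\<lambda>\<eta>. cis (- (y * \<eta>)) * F \<eta>)"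

definition hatP :: "real \<Rightarrow> (real \<Rightarrow> complex) \<Rightarrow> real \<Rightarrow> complex" where
  "hatP \<xi> F = (\<lambda>\<eta>. F (\<eta> + \<xi>))"

definition hatD :: "ennreal \<Rightarrow> real \<Rightarrow> (real \<Rightarrow> complex) \<Rightarrow> real \<Rightarrow> complex" where
  "hatD p h F = (\<lambda>\<eta>. complex_of_real (h powr (recip p - 1)) * F (\<eta> / h))"

definition hatA :: "real \<Rightarrow> (real \<Rightarrow> complex) \<Rightarrow> real \<Rightarrow> complex" where
  "hatA s F = (\<lambda>\<eta>. cis (s * \<eta> ^ 3) * F \<eta>)"

end

theory Submission
  imports Defs
begin

(* On the Fourier side A(s) and T(y) multiply by unimodular factors, so they leave every
   local norm unchanged.  The dilation D_p(2^m) carries the piece of the norm on I_{j,k}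
   exactly onto the piece on I_{j+m,k}: the factor 2^{m(1/p-1)} and the Jacobian factor
   2^{m/q'} combine to 2^{m(1/p-1/q)}, which is the change of |I|^{1/q-1/p}.  Hence D_p(2^m)
   only reindexes the l^r sum and is an isometry.  The modulation P(xi) translates the
   Fourier transform, and a translate of a dyadic interval of length 2^{-j} is covered by
   two adjacent dyadic intervals of the same length; since l^r is a quasi-norm this costs a
   constant depending only on r.  The lower bound is the upper bound for P(-xi). *)

section \<open>Arithmetic in ennreal\<close>

lemma epow_cmult:
  assumes "0 \<le> c" "0 < a"
  shows "epow (ennreal c * x) a = ennreal (c powr a) * epow x a"
proof (cases x)
  case (real y)
  then have "epow (ennreal c * x) a = ennreal ((c * y) powr a)"
    using assms by (simp add: epow_def flip: ennreal_mult)
  also have "\<dots> = ennreal (c powr a) * ennreal (y powr a)"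
    using real assms by (simp add: powr_mult ennreal_mult)
  finally show ?thesis
    using real by (simp add: epow_def)
next
  case top
  then show ?thesis
    using assms by (cases "c = 0") (simp_all add: epow_def ennreal_mult_top)
qed

lemma epow_mono:
  assumes "x \<le> y" "0 \<le> a"
  shows "epow x a \<le> epow y a"
proof (cases "y = \<infinity>")
  case False
  then have "x \<noteq> \<infinity>" "enn2real x \<le> enn2real y"
    using assms(1) by (auto simp: top_unique enn2real_mono less_top)
  then show ?thesis
    using False assms(2) by (simp add: epow_def ennreal_leI powr_mono2)
qed (simp add: epow_def)

lemma epow_add_le:
  assumes "0 < a"
  shows "epow (x + y) a \<le> ennreal (2 powr a) * (epow x a + epow y a)"
proof -
  have "epow (x + y) a \<le> epow (ennreal 2 * max x y) a"
    using assms by (intro epow_mono) (auto simp: max_def mult_2 add_mono)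
  also have "\<dots> = ennreal (2 powr a) * epow (max x y) a"
    using assms by (intro epow_cmult) auto
  also have "epow (max x y) a \<le> epow x a + epow y a"
    by (simp add: max_def)
  finally show ?thesis
    by (simp add: mult_left_mono)
qed

lemma ennreal_mult_Inf:
  fixes S :: "ennreal set"
  assumes "S \<noteq> {}" "c < \<infinity>"
  shows "c * Inf S = (INF s\<in>S. c * s)"
  using assms
  by (intro continuous_at_Inf_mono)
    (auto simp: mono_def mult_left_mono
      intro: continuous_on_imp_continuous_within[OF ennreal_continuous_on_cmult])

lemma ennreal_Inf_add:
  fixes S :: "ennreal set"
  assumes "S \<noteq> {}"
  shows "Inf S + c = (INF s\<in>S. s + c)"
  using assms
  by (intro continuous_at_Inf_mono) (auto simp: mono_def add_right_mono intro: continuous_add)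

lemma ennreal_divide_le_of_le_mult:
  assumes "0 < C" "x \<le> ennreal C * y"
  shows "ennreal (1 / C) * x \<le> y"
proof -
  have "ennreal (1 / C) * x \<le> ennreal (1 / C) * (ennreal C * y)"
    using assms(2) by (rule mult_left_mono) simp
  also have "\<dots> = y"
    using assms(1) by (simp add: mult.assoc[symmetric] flip: ennreal_mult)
  finally show ?thesis .
qed

section \<open>Exponents\<close>

lemma recip_nonneg: "0 \<le> recip e"
  by (simp add: recip_def)

lemma recip_top [simp]: "recip top = 0"
  by (simp add: recip_def)

lemma recip_finite:
  assumes "0 < e" "e \<noteq> \<infinity>"
  shows "recip e = 1 / enn2real e"
proof -
  obtain x where "e = ennreal x" "0 < x"
    using assms by (cases e) auto
  then show ?thesis
    by (simp add: recip_def inverse_ennreal inverse_eq_divide)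
qed

lemma recip_pos:
  assumes "0 < e" "e \<noteq> \<infinity>"
  shows "0 < recip e"
  using assms by (simp add: recip_finite enn2real_positive_iff less_top)

lemma recip_le_one:
  assumes "1 \<le> e"
  shows "recip e \<le> 1"
proof (cases "e = \<infinity>")
  case False
  moreover have "0 < e"
    using assms by (rule order_less_le_trans[OF zero_less_one])
  moreover have "1 \<le> enn2real e"
    using enn2real_mono[OF assms] False by (simp add: less_top)
  ultimately show ?thesis
    by (simp add: recip_finite)
qed simp

lemma recip_hconj:
  assumes "1 \<le> q"
  shows "recip (hconj q) = 1 - recip q"
proof (cases q)
  case (real x)
  then have "1 \<le> x"
    using assms by (simp flip: ennreal_1)
  then show ?thesis
    using real by (cases "x = 1")
      (simp_all add: hconj_def recip_def inverse_ennreal field_simps)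
qed (simp add: hconj_def recip_def)

lemma one_le_hconj:
  assumes "1 \<le> q"
  shows "1 \<le> hconj q"
proof (cases q)
  case (real x)
  then have "1 \<le> x"
    using assms by (simp flip: ennreal_1)
  then show ?thesis
    using real by (cases "x = 1") (simp_all add: hconj_def field_simps flip: ennreal_1)
qed (simp add: hconj_def)

section \<open>Local Lebesgue norms\<close>

lemma AE_bound_set_cmult:
  assumes "0 < a"
  shows "{z. AE x in M. P x \<longrightarrow> ennreal a * g x \<le> z}
    = (\<lambda>z. ennreal a * z) ` {z. AE x in M. P x \<longrightarrow> g x \<le> z}"
proof -
  have inv: "ennreal a * ennreal (1 / a) = 1"
    using assms by (simp flip: ennreal_mult)
  then have z: "z = ennreal a * (ennreal (1 / a) * z)" for z
    by (simp add: mult.assoc[symmetric])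
  have le_iff: "ennreal a * w \<le> z \<longleftrightarrow> w \<le> ennreal (1 / a) * z" for w z
    using assms z[of z] by (metis ennreal_mult_le_mult_iff ennreal_eq_0_iff ennreal_neq_top not_le)
  show ?thesis
  proof (intro equalityI subsetI)
    fix z assume "z \<in> {z. AE x in M. P x \<longrightarrow> ennreal a * g x \<le> z}"
    then have "ennreal (1 / a) * z \<in> {z. AE x in M. P x \<longrightarrow> g x \<le> z}"
      by (auto elim!: eventually_mono simp: le_iff)
    then show "z \<in> (\<lambda>z. ennreal a * z) ` {z. AE x in M. P x \<longrightarrow> g x \<le> z}"
      using z by blast
  qed (auto elim!: eventually_mono intro: mult_left_mono)
qed

lemma Lnorm_finite:
  assumes "0 < e" "e \<noteq> \<infinity>"
  shows "Lnorm e I F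
    = epow (\<integral>\<^sup>+ x. indicator I x * ennreal (cmod (F x) powr enn2real e) \<partial>lborel) (recip e)"
  using assms by (simp add: Lnorm_def recip_finite)

lemma Lnorm_cmult:
  assumes F: "F \<in> borel_measurable lborel" and I: "I \<in> sets borel"
    and e: "0 < e" and a: "0 \<le> a"
  shows "Lnorm e I (\<lambda>x. complex_of_real a * F x) = ennreal a * Lnorm e I F"
proof (cases "e = \<infinity>")
  case True
  define S where "S = {z. AE x in lborel. x \<in> I \<longrightarrow> ennreal (cmod (F x)) \<le> z}"
  have "S \<noteq> {}"
    unfolding S_def by (auto intro: exI[of _ \<infinity>])
  then show ?thesis
    using True a
      AE_bound_set_cmult[where M=lborel and P="\<lambda>x. x \<in> I" and g="\<lambda>x. ennreal (cmod (F x))"]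
    unfolding Lnorm_def S_def[symmetric]
    by (cases "a = 0")
      (simp_all add: norm_mult ennreal_mult ennreal_mult_Inf image_image bot_ennreal)
next
  case False
  define E where "E = enn2real e"
  have E: "0 < E"
    using e False by (simp add: E_def enn2real_positive_iff less_top)
  have [measurable]: "F \<in> borel_measurable borel" "I \<in> sets borel"
    using F I by simp_all
  have "(\<integral>\<^sup>+ x. indicator I x * ennreal (cmod (a * F x) powr E) \<partial>lborel)
      = (\<integral>\<^sup>+ x. ennreal (a powr E) * (indicator I x * ennreal (cmod (F x) powr E)) \<partial>lborel)"
    using a by (simp add: norm_mult powr_mult ennreal_mult mult_ac)
  also have "\<dots> = ennreal (a powr E)
      * (\<integral>\<^sup>+ x. indicator I x * ennreal (cmod (F x) powr E) \<partial>lborel)"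
    by (rule nn_integral_cmult) measurable
  finally show ?thesis
    using False e E a
    by (simp add: Lnorm_finite recip_finite E_def[symmetric] epow_cmult powr_powr)
qed

lemma Lnorm_affine:
  assumes F: "F \<in> borel_measurable lborel" and I: "I \<in> sets borel"
    and e: "0 < e" and c: "0 < c"
  shows "Lnorm e I (\<lambda>x. F (x / c + t)) = ennreal (c powr recip e) * Lnorm e {u. c * (u - t) \<in> I} F"
proof -
  have [measurable]: "F \<in> borel_measurable borel" "I \<in> sets borel"
    using F I by simp_all
  have affine_inverse: "(c * u - c * t) / c + t = u" "- c * t + c * (x / c + t) = x" for u x
    using c by (simp_all add: field_simps)
  show ?thesis
  proof (cases "e = \<infinity>")
    case True
    have "(AE x in lborel. x \<in> I \<longrightarrow> ennreal (cmod (F (x / c + t))) \<le> z)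
      \<longleftrightarrow> (AE u in lborel. c * (u - t) \<in> I \<longrightarrow> ennreal (cmod (F u)) \<le> z)" for z
    proof
      assume "AE x in lborel. x \<in> I \<longrightarrow> ennreal (cmod (F (x / c + t))) \<le> z"
      from AE_borel_affine[OF _ _ this, of c "- c * t"]
      show "AE u in lborel. c * (u - t) \<in> I \<longrightarrow> ennreal (cmod (F u)) \<le> z"
        using c by (simp add: affine_inverse right_diff_distrib)
    next
      assume "AE u in lborel. c * (u - t) \<in> I \<longrightarrow> ennreal (cmod (F u)) \<le> z"
      from AE_borel_affine[OF _ _ this, of "1 / c" t]
      show "AE x in lborel. x \<in> I \<longrightarrow> ennreal (cmod (F (x / c + t))) \<le> z"
        using c by (simp add: add.commute)
    qed
    then show ?thesis
      using True c by (simp add: Lnorm_def)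
  next
    case False
    define f where "f x = indicator I x * ennreal (cmod (F (x / c + t)) powr enn2real e)" for x
    have "(\<integral>\<^sup>+ x. f x \<partial>lborel) = ennreal c * (\<integral>\<^sup>+ u. f (- c * t + c * u) \<partial>lborel)"
      using nn_integral_real_affine[of f c "- c * t"] c unfolding f_def by simp
    also have "(\<lambda>u. f (- c * t + c * u))
        = (\<lambda>u. indicator {u. c * (u - t) \<in> I} u * ennreal (cmod (F u) powr enn2real e))"
      by (auto simp: f_def affine_inverse indicator_def right_diff_distrib)
    finally show ?thesis
      using False e c unfolding f_def by (simp add: Lnorm_finite epow_cmult recip_pos)
  qed
qed

lemma Lnorm_mono_set:
  assumes "I \<subseteq> J"
  shows "Lnorm e I F \<le> Lnorm e J F"
proof (cases "e = \<infinity>")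
  case True
  have "{z. AE x in lborel. x \<in> J \<longrightarrow> ennreal (cmod (F x)) \<le> z}
      \<subseteq> {z. AE x in lborel. x \<in> I \<longrightarrow> ennreal (cmod (F x)) \<le> z}"
    using assms by (auto elim!: eventually_mono)
  then show ?thesis
    using True unfolding Lnorm_def by (simp add: Inf_superset_mono)
next
  case False
  have "(\<integral>\<^sup>+ x. indicator I x * ennreal (cmod (F x) powr enn2real e) \<partial>lborel)
      \<le> (\<integral>\<^sup>+ x. indicator J x * ennreal (cmod (F x) powr enn2real e) \<partial>lborel)"
    using assms by (intro nn_integral_mono) (auto simp: indicator_def)
  then show ?thesis
    using False unfolding Lnorm_def by (simp add: epow_mono)
qed

lemma Lnorm_top_Un_le: "Lnorm \<infinity> (A \<union> B) F \<le> Lnorm \<infinity> A F + Lnorm \<infinity> B F"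
proof -
  define S where "S C = {z. AE x in lborel. x \<in> C \<longrightarrow> ennreal (cmod (F x)) \<le> z}" for C
  have S_ne: "S C \<noteq> {}" for C
    unfolding S_def by (auto intro: exI[of _ \<infinity>])
  have sum_mem: "z1 + z2 \<in> S (A \<union> B)" if "z1 \<in> S A" "z2 \<in> S B" for z1 z2
  proof -
    from that have "AE x in lborel. x \<in> A \<longrightarrow> ennreal (cmod (F x)) \<le> z1"
      "AE x in lborel. x \<in> B \<longrightarrow> ennreal (cmod (F x)) \<le> z2"
      by (simp_all add: S_def)
    then have "AE x in lborel. x \<in> A \<union> B \<longrightarrow> ennreal (cmod (F x)) \<le> z1 + z2"
      by eventually_elim (auto intro: add_increasing add_increasing2)
    then show ?thesis
      by (simp add: S_def)
  qed
  have "Inf (S (A \<union> B)) \<le> (INF z1\<in>S A. INF z2\<in>S B. z2 + z1)"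
    by (intro INF_greatest Inf_lower) (metis add.commute sum_mem)
  also have "\<dots> = (INF z1\<in>S A. Inf (S B) + z1)"
    using ennreal_Inf_add[OF S_ne, of B] by simp
  also have "\<dots> = Inf (S A) + Inf (S B)"
    using ennreal_Inf_add[OF S_ne, of A "Inf (S B)"] by (simp add: add.commute)
  finally show ?thesis
    unfolding Lnorm_def S_def by simp
qed

lemma Lnorm_Un_le:
  assumes F: "F \<in> borel_measurable lborel" and A: "A \<in> sets borel" and B: "B \<in> sets borel"
    and e: "1 \<le> e"
  shows "Lnorm e (A \<union> B) F \<le> 2 * (Lnorm e A F + Lnorm e B F)"
proof (cases "e = \<infinity>")
  case True
  then have "Lnorm e (A \<union> B) F \<le> Lnorm e A F + Lnorm e B F"
    using Lnorm_top_Un_le by simp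
  also have "\<dots> \<le> 2 * (Lnorm e A F + Lnorm e B F)"
    unfolding mult_2 by (rule add_increasing2) simp_all
  finally show ?thesis .
next
  case False
  have e0: "0 < e"
    using e by (rule order_less_le_trans[OF zero_less_one])
  have [measurable]: "F \<in> borel_measurable borel" "A \<in> sets borel" "B \<in> sets borel"
    using F A B by simp_all
  define N where
    "N C = (\<integral>\<^sup>+ x. indicator C x * ennreal (cmod (F x) powr enn2real e) \<partial>lborel)" for C
  have "N (A \<union> B) \<le> (\<integral>\<^sup>+ x. indicator A x * ennreal (cmod (F x) powr enn2real e)
      + indicator B x * ennreal (cmod (F x) powr enn2real e) \<partial>lborel)"
    unfolding N_def by (intro nn_integral_mono) (auto simp: indicator_def)
  also have "\<dots> = N A + N B"
    unfolding N_def by (rule nn_integral_add) measurable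
  finally have "epow (N (A \<union> B)) (recip e) \<le> epow (N A + N B) (recip e)"
    by (rule epow_mono[OF _ recip_nonneg])
  also have "\<dots> \<le> ennreal (2 powr recip e) * (epow (N A) (recip e) + epow (N B) (recip e))"
    using False e0 by (intro epow_add_le recip_pos)
  also have "\<dots> \<le> 2 * (epow (N A) (recip e) + epow (N B) (recip e))"
    using powr_mono[OF recip_le_one[OF e], of 2]
    by (intro mult_right_mono) (simp_all flip: ennreal_numeral)
  finally show ?thesis
    using False e0 unfolding N_def by (simp add: Lnorm_finite)
qed

section \<open>Dyadic pieces\<close>

lemma dyadic_borel [measurable]: "dyadic j k \<in> sets borel"
  by (simp add: dyadic_def)

lemma dyadic_dilate: "{u. 2 powr real_of_int m * u \<in> dyadic j k} = dyadic (j + m) k"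
proof -
  have e: "2 powr - real_of_int (j + m) = 2 powr - real_of_int j / 2 powr real_of_int m"
    by (simp add: powr_diff[symmetric])
  have "(0::real) < 2 powr real_of_int m"
    by simp
  then show ?thesis
    unfolding dyadic_def e by (auto simp: field_simps)
qed

lemma dyadic_translate_subset:
  fixes \<xi> :: real and j k :: int
  defines "c \<equiv> \<lfloor>\<xi> * 2 powr real_of_int j\<rfloor>"
  shows "{u. u - \<xi> \<in> dyadic j k} \<subseteq> dyadic j (k + c) \<union> dyadic j (k + c + 1)"
proof
  fix u assume "u \<in> {u. u - \<xi> \<in> dyadic j k}"
  moreover define d where "d = (2::real) powr - real_of_int j"
  ultimately have u: "real_of_int k * d \<le> u - \<xi>" "u - \<xi> < (real_of_int k + 1) * d"
    by (auto simp: dyadic_def)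
  have d: "0 < d" "2 powr real_of_int j = 1 / d"
    by (simp_all add: d_def powr_minus divide_inverse)
  have "real_of_int c \<le> \<xi> / d" "\<xi> / d < real_of_int c + 1"
    unfolding c_def d by (simp_all add: divide_inverse)
  then have "real_of_int c * d \<le> \<xi>" "\<xi> < (real_of_int c + 1) * d"
    using d by (simp_all add: field_simps)
  then have "real_of_int (k + c) * d \<le> u" "u < real_of_int (k + c + 2) * d"
    using u by (simp_all add: algebra_simps)
  then show "u \<in> dyadic j (k + c) \<union> dyadic j (k + c + 1)"
    by (cases "u < real_of_int (k + c + 1) * d")
      (auto simp: dyadic_def d_def[symmetric] algebra_simps)
qed

lemma locpiece_hatD:
  assumes F: "F \<in> borel_measurable lborel" and q: "1 \<le> q"
  shows "locpiece p q (hatD p (2 powr real_of_int m) F) (j, k) = locpiece p q F (j + m, k)"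
proof -
  define h where "h = (2::real) powr real_of_int m"
  define e where "e = hconj q"
  have e: "0 < e"
    unfolding e_def using one_le_hconj[OF q] by (rule order_less_le_trans[OF zero_less_one])
  have [measurable]: "F \<in> borel_measurable borel"
    using F by simp
  have dilate: "Lnorm e (dyadic j k) (\<lambda>\<eta>. F (\<eta> / h))
      = ennreal (h powr recip e) * Lnorm e (dyadic (j + m) k) F"
    using Lnorm_affine[OF F dyadic_borel e, of h j k 0] by (simp add: h_def dyadic_dilate)
  have "Lnorm e (dyadic j k) (hatD p h F)
      = ennreal (h powr (recip p - 1)) * Lnorm e (dyadic j k) (\<lambda>\<eta>. F (\<eta> / h))"
    unfolding hatD_def by (simp add: Lnorm_cmult e)
  also have "\<dots> = ennreal (h powr (recip p - recip q)) * Lnorm e (dyadic (j + m) k) F"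
    unfolding dilate
    by (simp add: e_def recip_hconj q mult.assoc[symmetric] powr_add[symmetric] flip: ennreal_mult)
  finally have L: "Lnorm e (dyadic j k) (hatD p h F)
      = ennreal (h powr (recip p - recip q)) * Lnorm e (dyadic (j + m) k) F" .
  have scale: "(2 powr - real_of_int j) powr (recip q - recip p) * h powr (recip p - recip q)
      = (2 powr - real_of_int (j + m)) powr (recip q - recip p)"
    unfolding h_def by (simp add: powr_powr powr_add[symmetric] algebra_simps)
  have "locpiece p q (hatD p h F) (j, k)
      = ennreal ((2 powr - real_of_int j) powr (recip q - recip p))
        * Lnorm e (dyadic j k) (hatD p h F)"
    by (simp add: locpiece_def e_def)
  also have "\<dots> = ennreal ((2 powr - real_of_int j) powr (recip q - recip p)
        * h powr (recip p - recip q)) * Lnorm e (dyadic (j + m) k) F"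
    unfolding L by (simp add: h_def ennreal_mult mult.assoc)
  also have "\<dots> = locpiece p q F (j + m, k)"
    unfolding scale by (simp add: locpiece_def e_def)
  finally show ?thesis
    unfolding h_def .
qed

lemma locpiece_hatP_le:
  fixes \<xi> :: real and j k :: int
  assumes F: "F \<in> borel_measurable lborel" and q: "1 \<le> q"
  defines "c \<equiv> \<lfloor>\<xi> * 2 powr real_of_int j\<rfloor>"
  shows "locpiece p q (hatP \<xi> F) (j, k)
    \<le> 2 * (locpiece p q F (j, k + c) + locpiece p q F (j, k + c + 1))"
proof -
  define e where "e = hconj q"
  have e: "1 \<le> e"
    unfolding e_def using q by (rule one_le_hconj)
  then have e0: "0 < e"
    by (rule order_less_le_trans[OF zero_less_one])
  have "Lnorm e (dyadic j k) (hatP \<xi> F) = Lnorm e {u. u - \<xi> \<in> dyadic j k} F"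
    using Lnorm_affine[OF F dyadic_borel e0 zero_less_one, of j k \<xi>] by (simp add: hatP_def)
  also have "\<dots> \<le> Lnorm e (dyadic j (k + c) \<union> dyadic j (k + c + 1)) F"
    unfolding c_def by (intro Lnorm_mono_set dyadic_translate_subset)
  also have "\<dots> \<le> 2 * (Lnorm e (dyadic j (k + c)) F + Lnorm e (dyadic j (k + c + 1)) F)"
    using F e by (intro Lnorm_Un_le) simp_all
  finally have L: "Lnorm e (dyadic j k) (hatP \<xi> F)
      \<le> 2 * (Lnorm e (dyadic j (k + c)) F + Lnorm e (dyadic j (k + c + 1)) F)" .
  define w where "w = ennreal ((2 powr - real_of_int j) powr (recip q - recip p))"
  have "locpiece p q (hatP \<xi> F) (j, k) = w * Lnorm e (dyadic j k) (hatP \<xi> F)"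
    by (simp add: locpiece_def w_def e_def)
  also have "\<dots> \<le> w * (2 * (Lnorm e (dyadic j (k + c)) F + Lnorm e (dyadic j (k + c + 1)) F))"
    using L by (rule mult_left_mono) simp
  also have "\<dots> = 2 * (locpiece p q F (j, k + c) + locpiece p q F (j, k + c + 1))"
    by (simp add: locpiece_def w_def e_def algebra_simps)
  finally show ?thesis .
qed

section \<open>The sequence quasi-norm\<close>

definition ell_norm :: "ennreal \<Rightarrow> ('i \<Rightarrow> ennreal) \<Rightarrow> ennreal" where
  "ell_norm r f =
     (if r = \<infinity> then (SUP i. f i)
      else epow (\<integral>\<^sup>+ i. epow (f i) (enn2real r) \<partial>count_space UNIV) (1 / enn2real r))"

lemma hatM_norm_eq_ell_norm: "hatM_norm p q r F = ell_norm r (locpiece p q F)"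
  by (simp add: hatM_norm_def ell_norm_def)

lemma ell_norm_mono:
  assumes "\<And>i. f i \<le> g i"
  shows "ell_norm r f \<le> ell_norm r g"
  unfolding ell_norm_def
  using assms by (auto intro!: SUP_mono epow_mono nn_integral_mono)

lemma ell_norm_reindex:
  assumes "bij \<sigma>"
  shows "ell_norm r (\<lambda>i. f (\<sigma> i)) = ell_norm r f"
proof -
  have "(SUP i. f (\<sigma> i)) = Sup (f ` range \<sigma>)"
    by (simp add: image_image)
  also have "\<dots> = (SUP i. f i)"
    using bij_is_surj[OF assms] by simp
  finally have "(SUP i. f (\<sigma> i)) = (SUP i. f i)" .
  then show ?thesis
    using nn_integral_bij_count_space[OF assms, of "\<lambda>i. epow (f i) (enn2real r)"]
    by (simp add: ell_norm_def)
qed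

lemma ell_norm_cmult:
  assumes r: "0 < r" and c: "0 \<le> c"
  shows "ell_norm r (\<lambda>i. ennreal c * f i) = ennreal c * ell_norm r f"
proof (cases "r = \<infinity>")
  case True
  then show ?thesis
    by (simp add: ell_norm_def SUP_mult_left_ennreal)
next
  case False
  define R where "R = enn2real r"
  have R: "0 < R"
    using r False by (simp add: R_def enn2real_positive_iff less_top)
  have "(\<integral>\<^sup>+ i. epow (ennreal c * f i) R \<partial>count_space UNIV)
      = ennreal (c powr R) * (\<integral>\<^sup>+ i. epow (f i) R \<partial>count_space UNIV)"
    using R c by (simp add: epow_cmult nn_integral_cmult)
  then show ?thesis
    using False R c by (simp add: ell_norm_def R_def[symmetric] epow_cmult powr_powr)
qed

lemma ell_norm_add_le:
  assumes r: "0 < r"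
  shows "ell_norm r (\<lambda>i. f i + g i)
    \<le> ennreal (2 powr (1 + recip r)) * (ell_norm r f + ell_norm r g)"
proof (cases "r = \<infinity>")
  case True
  have "(SUP i. f i + g i) \<le> (SUP i. f i) + (SUP i. g i)"
    by (intro SUP_least add_mono SUP_upper) auto
  also have "\<dots> \<le> ennreal 2 * ((SUP i. f i) + (SUP i. g i))"
    by (simp add: mult_2 add_increasing2)
  finally show ?thesis
    using True by (simp add: ell_norm_def)
next
  case False
  define R where "R = enn2real r"
  have R: "0 < R"
    using r False by (simp add: R_def enn2real_positive_iff less_top)
  define N where "N h = (\<integral>\<^sup>+ i. epow (h i) R \<partial>count_space UNIV)" for h :: "'a \<Rightarrow> ennreal"
  have "N (\<lambda>i. f i + g i)
      \<le> (\<integral>\<^sup>+ i. ennreal (2 powr R) * (epow (f i) R + epow (g i) R) \<partial>count_space UNIV)"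
    unfolding N_def using R by (intro nn_integral_mono epow_add_le)
  also have "\<dots> = ennreal (2 powr R) * (N f + N g)"
    by (simp add: N_def nn_integral_cmult nn_integral_add)
  finally have "epow (N (\<lambda>i. f i + g i)) (1 / R) \<le> epow (ennreal (2 powr R) * (N f + N g)) (1 / R)"
    using R by (intro epow_mono) simp_all
  also have "\<dots> = ennreal 2 * epow (N f + N g) (1 / R)"
    using R by (simp add: epow_cmult powr_powr)
  also have "\<dots> \<le> ennreal 2 * (ennreal (2 powr (1 / R)) * (epow (N f) (1 / R) + epow (N g) (1 / R)))"
    using R by (intro mult_left_mono epow_add_le) simp_all
  also have "ennreal 2 * (ennreal (2 powr (1 / R)) * (epow (N f) (1 / R) + epow (N g) (1 / R)))
      = ennreal (2 powr (1 + 1 / R)) * (epow (N f) (1 / R) + epow (N g) (1 / R))"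
    unfolding powr_add by (simp add: ennreal_mult' mult.assoc)
  finally show ?thesis
    using False r by (simp add: ell_norm_def N_def R_def recip_finite)
qed

section \<open>Action of the operators\<close>

lemma hatM_norm_cong_cmod:
  assumes "\<And>\<eta>. cmod (G \<eta>) = cmod (F \<eta>)"
  shows "hatM_norm p q r G = hatM_norm p q r F"
proof -
  have "Lnorm e I G = Lnorm e I F" for e I
    using assms by (simp add: Lnorm_def)
  then show ?thesis
    by (simp add: hatM_norm_def locpiece_def)
qed

lemma hatM_norm_hatD:
  assumes "F \<in> borel_measurable lborel" "1 \<le> q"
  shows "hatM_norm p q r (hatD p (2 powr real_of_int m) F) = hatM_norm p q r F"
proof -
  define \<sigma> where "\<sigma> = (\<lambda>(j::int, k::int). (j + m, k))"
  have "bij \<sigma>"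
    unfolding \<sigma>_def by (rule o_bij[where g="\<lambda>(j, k). (j - m, k)"]) (auto simp: fun_eq_iff)
  moreover have "locpiece p q (hatD p (2 powr real_of_int m) F) = (\<lambda>i. locpiece p q F (\<sigma> i))"
  proof
    fix i :: "int \<times> int"
    show "locpiece p q (hatD p (2 powr real_of_int m) F) i = locpiece p q F (\<sigma> i)"
      using locpiece_hatD[OF assms] by (cases i) (simp add: \<sigma>_def)
  qed
  ultimately show ?thesis
    by (simp add: hatM_norm_eq_ell_norm ell_norm_reindex)
qed

lemma hatM_norm_hatP_le:
  assumes F: "F \<in> borel_measurable lborel" and q: "1 \<le> q" and r: "0 < r"
  shows "hatM_norm p q r (hatP \<xi> F) \<le> ennreal (2 powr (3 + recip r)) * hatM_norm p q r F"
proof -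
  define f where "f = locpiece p q F"
  define c where "c j = \<lfloor>\<xi> * 2 powr real_of_int j\<rfloor>" for j :: int
  define \<sigma> where "\<sigma> d = (\<lambda>(j, k). (j, k + c j + d))" for d :: int
  have bij: "bij (\<sigma> d)" for d
    unfolding \<sigma>_def by (rule o_bij[where g="\<lambda>(j, k). (j, k - c j - d)"]) (auto simp: fun_eq_iff)
  have "hatM_norm p q r (hatP \<xi> F) \<le> ell_norm r (\<lambda>i. ennreal 2 * (f (\<sigma> 0 i) + f (\<sigma> 1 i)))"
    unfolding hatM_norm_eq_ell_norm
    using locpiece_hatP_le[OF F q] by (intro ell_norm_mono) (auto simp: f_def \<sigma>_def c_def)
  also have "\<dots> = ennreal 2 * ell_norm r (\<lambda>i. f (\<sigma> 0 i) + f (\<sigma> 1 i))"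
    using r by (rule ell_norm_cmult) simp
  also have "\<dots> \<le> ennreal 2 * (ennreal (2 powr (1 + recip r))
      * (ell_norm r (\<lambda>i. f (\<sigma> 0 i)) + ell_norm r (\<lambda>i. f (\<sigma> 1 i))))"
    using ell_norm_add_le[OF r] by (rule mult_left_mono) simp
  also have "\<dots> = ennreal 2 * (ennreal (2 powr (1 + recip r)) * (ell_norm r f + ell_norm r f))"
    by (simp only: ell_norm_reindex[OF bij])
  also have "\<dots> = ennreal (2 powr (3 + recip r)) * ell_norm r f"
  proof -
    have "(2::real) powr (3 + recip r) = 2 * 2 powr (1 + recip r) * 2"
      by (simp add: powr_add)
    then show ?thesis
      by (simp add: ennreal_mult mult_2[symmetric] mult_ac)
  qed
  finally show ?thesis
    by (simp add: hatM_norm_eq_ell_norm f_def)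
qed

lemma hatM_norm_hatD_hatA_hatT:
  assumes "F \<in> borel_measurable lborel" "1 \<le> q"
  shows "hatM_norm p q r (hatD p (2 powr real_of_int m) (hatA s (hatT y F))) = hatM_norm p q r F"
  using hatM_norm_hatD[OF assms]
  by (subst hatM_norm_cong_cmod[where F="hatD p (2 powr real_of_int m) F"])
    (simp_all add: hatD_def hatA_def hatT_def norm_mult)

lemma borel_measurable_hatP:
  "F \<in> borel_measurable borel \<Longrightarrow> hatP \<xi> F \<in> borel_measurable borel"
  unfolding hatP_def by simp

lemma hatM_norm_hatP_ge:
  assumes F: "F \<in> borel_measurable lborel" and q: "1 \<le> q" and r: "0 < r"
  shows "ennreal (1 / 2 powr (3 + recip r)) * hatM_norm p q r F \<le> hatM_norm p q r (hatP \<xi> F)"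
proof (rule ennreal_divide_le_of_le_mult)
  have "hatM_norm p q r F = hatM_norm p q r (hatP (- \<xi>) (hatP \<xi> F))"
    by (simp add: hatP_def)
  also have "\<dots> \<le> ennreal (2 powr (3 + recip r)) * hatM_norm p q r (hatP \<xi> F)"
    using F q r by (intro hatM_norm_hatP_le) (simp_all add: borel_measurable_hatP)
  finally show "hatM_norm p q r F \<le> ennreal (2 powr (3 + recip r)) * hatM_norm p q r (hatP \<xi> F)" .
qed simp

theorem lemma2p3:
  fixes p q r :: ennreal
  assumes "1 \<le> p" and "p \<le> q" and "0 < r"
  shows "(\<exists>C::real. C \<ge> 1 \<and>
           (\<forall>F m \<xi> s y. F \<in> borel_measurable lborel \<and> hatM_norm p q r F < \<infinity> \<longrightarrow>
              ennreal (1 / C) * hatM_norm p q r F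
                \<le> hatM_norm p q r (hatD p (2 powr real_of_int m) (hatA s (hatT y (hatP \<xi> F))))
            \<and> hatM_norm p q r (hatD p (2 powr real_of_int m) (hatA s (hatT y (hatP \<xi> F))))
                \<le> ennreal C * hatM_norm p q r F))
       \<and> (\<forall>F m s y. F \<in> borel_measurable lborel \<and> hatM_norm p q r F < \<infinity> \<longrightarrow>
              hatM_norm p q r F
                \<le> hatM_norm p q r (hatD p (2 powr real_of_int m) (hatA s (hatT y (hatP 0 F))))
            \<and> hatM_norm p q r (hatD p (2 powr real_of_int m) (hatA s (hatT y (hatP 0 F))))
                \<le> hatM_norm p q r F)"
proof -
  \<comment> \<open>The bounds hold for every measurable F.\<close>
  define C where "C = (2::real) powr (3 + recip r)"
  have "1 \<le> C"
    unfolding C_def by (rule ge_one_powr_ge_zero) (simp_all add: recip_nonneg add_nonneg_nonneg)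
  moreover have "1 \<le> q"
    using assms(1,2) by (rule order_trans)
  moreover have "hatP 0 F = F" for F :: "real \<Rightarrow> complex"
    by (simp add: hatP_def)
  ultimately show ?thesis
    using assms(3)
    by (intro conjI exI[of _ C])
      (simp_all add: C_def hatM_norm_hatD_hatA_hatT borel_measurable_hatP
        hatM_norm_hatP_le hatM_norm_hatP_ge)
qed

end
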